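(* For each natural number $N$ there exists $d_N>0$ such that for every complex $x$ with $|x|\ge d_N$ there exists $\theta\in\mathbb{C}$ with $|\theta|\le1$ such that \[ \log\Bigl(1-\sum_{n=1}^N\frac{n!}{x^n}\Bigr)^{-1}=\sum_{n=1}^N\frac{a_n}{n}\frac{1}{x^n}+\theta\,\frac{a_{N+1}}{N+1}\frac{1}{x^{N+1}}. \]
   Context: $\log$ denotes the principal branch of the logarithm. The integers $a_n$ are defined by $a_1=1$ and $a_n=n\cdot n!+\sum_{k=1}^{n-1}k!\,a_{n-k}$ for $n\ge2$; equivalently, as formal power series in $1/x$, $\log\bigl(1-\sum_{n\ge1}n!\,x^{-n}\bigr)^{-1}=\sum_{n\ge1}\frac{a_n}{n}x^{-n}$. *)

theory Defs
  imports "HOL-Complex_Analysis.Complex_Analysis"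
begin

text \<open>The integers a_n: a_1 = 1, a_n = n n! + sum_{k=1}^{n-1} k! a_{n-k}.
  (The general recursion also gives a_1 = 1; a_0 = 0 is an unused convention.)\<close>
fun seq_a :: "nat \<Rightarrow> int" where
  "seq_a 0 = 0"
| "seq_a (Suc m) = int (Suc m * fact (Suc m)) + (\<Sum>k\<in>{1..m}. fact k * seq_a (Suc m - k))"

lemma seq_a_1: "seq_a 1 = 1" by simp

end

theory Submission
  imports Defs
begin

text \<open>Put y = 1/x and F(y) = \<Sum>n=1..N. n! y^n. Then g = Ln (1/(1 - F)) is analytic at 0 with
  g(0) = 0 and (1 - F) g' = F'. Read coefficientwise, this is the recursion defining a_n, except
  that truncating F after degree N lowers the coefficient of y^(N+1) in g from a_(N+1)/(N+1) to
  a_(N+1)/(N+1) - (N+1)!. Since a_(N+1) >= (N+1)(N+1)!, that coefficient has modulus strictly less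
  than a_(N+1)/(N+1), and by continuity so has the remainder (g(y) - \<Sum>n=1..N. a_n/n y^n) / y^(N+1)
  for small y.\<close>

unbundle no vec_syntax

lemma seq_a_nonneg: "0 \<le> seq_a n"
proof (induction n rule: less_induct)
  case (less n)
  then show ?case
    by (cases n) (auto intro!: add_nonneg_nonneg sum_nonneg mult_nonneg_nonneg)
qed

lemma seq_a_Suc_ge: "int (Suc m) * fact (Suc m) \<le> seq_a (Suc m)"
proof -
  have "0 \<le> (\<Sum>k\<in>{1..m}. fact k * seq_a (Suc m - k))"
    using seq_a_nonneg by (intro sum_nonneg mult_nonneg_nonneg) auto
  then show ?thesis by (simp only: seq_a.simps of_nat_mult of_nat_fact)
qed

lemma seq_a_Suc_pos: "0 < seq_a (Suc m)"
proof -
  have "0 < int (Suc m) * fact (Suc m)"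
    by (simp del: of_nat_Suc fact_Suc)
  with seq_a_Suc_ge[of m] show ?thesis
    by linarith
qed

lemma of_int_seq_a_Suc:
  "(of_int (seq_a (Suc m)) :: 'a::{comm_ring_1,ring_char_0}) =
     of_nat (Suc m) * fact (Suc m) + (\<Sum>k=1..m. fact k * of_int (seq_a (Suc m - k)))"
  by (simp only: seq_a.simps of_int_add of_int_of_nat_eq of_int_sum of_int_mult of_int_fact
      of_nat_mult of_nat_fact)

definition fact_fps :: "nat \<Rightarrow> 'a::{comm_ring_1,ring_char_0} fps" where
  "fact_fps N = Abs_fps (\<lambda>n. if n \<in> {1..N} then fact n else 0)"

lemma fps_deriv_nth_eq_seq_a:
  fixes D :: "'a::{comm_ring_1,ring_char_0} fps"
  assumes eq: "(1 - fact_fps N) * D = fps_deriv (fact_fps N)" and "j \<le> N"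
  shows "D $ j = of_int (seq_a (Suc j)) - (if j = N then of_nat (Suc N) * fact (Suc N) else 0)"
  using \<open>j \<le> N\<close>
proof (induction j rule: less_induct)
  case (less j)
  have "D $ j - (\<Sum>i=0..j. fact_fps N $ i * D $ (j - i)) = of_nat (Suc j) * fact_fps N $ Suc j"
    using arg_cong[OF eq, of "\<lambda>F. F $ j"] by (simp only: left_diff_distrib fps_sub_nth
        mult_1 fps_mult_nth fps_deriv_nth Suc_eq_plus1)
  moreover have "(\<Sum>i=0..j. fact_fps N $ i * D $ (j - i)) =
      (\<Sum>k=1..j. fact k * of_int (seq_a (Suc j - k)))"
  proof -
    have "(\<Sum>i=0..j. fact_fps N $ i * D $ (j - i)) = (\<Sum>i=1..j. fact_fps N $ i * D $ (j - i))"
      by (simp add: sum.atLeast_Suc_atMost fact_fps_def)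
    also have "\<dots> = (\<Sum>k=1..j. fact k * of_int (seq_a (Suc j - k)))"
    proof (rule sum.cong)
      fix i assume i: "i \<in> {1..j}"
      then have "D $ (j - i) = of_int (seq_a (Suc (j - i)))" using less by auto
      then show "fact_fps N $ i * D $ (j - i) = fact i * of_int (seq_a (Suc j - i))"
        using i less.prems by (simp add: fact_fps_def Suc_diff_le del: seq_a.simps)
    qed simp
    finally show ?thesis .
  qed
  ultimately show ?case
    using less.prems of_int_seq_a_Suc[of j, where 'a='a]
    by (auto simp: fact_fps_def algebra_simps simp del: of_nat_Suc fact_Suc)
qed

lemma has_fps_expansion_monomial_sum:
  fixes c :: "nat \<Rightarrow> 'a::{banach,real_normed_div_algebra,comm_ring_1}"
  assumes "finite A"
  shows "(\<lambda>z. \<Sum>n\<in>A. c n * z ^ n) has_fps_expansion Abs_fps (\<lambda>n. if n \<in> A then c n else 0)"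
proof -
  have "(\<lambda>z. \<Sum>n\<in>A. c n * z ^ n) has_fps_expansion (\<Sum>n\<in>A. fps_const (c n) * fps_X ^ n)"
    by (intro has_fps_expansion_sum has_fps_expansion_cmult_left has_fps_expansion_fps_X_power)
  also have "(\<Sum>n\<in>A. fps_const (c n) * fps_X ^ n) = Abs_fps (\<lambda>n. if n \<in> A then c n else 0)"
    using assms by (intro fps_ext) (simp add: fps_sum_nth if_distrib cong: if_cong)
  finally show ?thesis .
qed

lemma has_field_derivative_Ln_inverse_one_minus:
  assumes "(f has_field_derivative f') (at z)" and "norm (f z) < 1"
  shows "((\<lambda>z. Ln (inverse (1 - f z))) has_field_derivative f' / (1 - f z)) (at z)"
proof -
  have "0 < Re (1 - f z)"
    using assms(2) abs_Re_le_cmod[of "f z"] by simp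
  then have "0 < Re (inverse (1 - f z))"
    by (simp add: Re_complex_div_gt_0 inverse_eq_divide)
  then have "inverse (1 - f z) \<notin> \<real>\<^sub>\<le>\<^sub>0"
    by (auto simp: complex_nonpos_Reals_iff)
  moreover have "1 - f z \<noteq> 0"
    using assms(2) by auto
  then have "((\<lambda>z. inverse (1 - f z)) has_field_derivative f' / (1 - f z)^2) (at z)"
    using assms(1) by (auto intro!: derivative_eq_intros simp: power2_eq_square field_simps)
  ultimately have "((\<lambda>z. Ln (inverse (1 - f z))) has_field_derivative
      inverse (inverse (1 - f z)) * (f' / (1 - f z)^2)) (at z)"
    by (intro DERIV_chain2[OF has_field_derivative_Ln])
  with \<open>1 - f z \<noteq> 0\<close> show ?thesis
    by (simp add: power2_eq_square)
qed

lemma Ln_inverse_one_minus_has_fps_expansion: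
  fixes f :: "complex \<Rightarrow> complex" and F :: "complex fps"
  assumes f: "f has_fps_expansion F" and "F $ 0 = 0"
  obtains G where "(\<lambda>z. Ln (inverse (1 - f z))) has_fps_expansion G"
    and "G $ 0 = 0" and "(1 - F) * fps_deriv G = fps_deriv F"
proof
  define g where "g z = Ln (inverse (1 - f z))" for z
  have "f 0 = 0"
    using has_fps_expansion_imp_0_eq_fps_nth_0[OF f] assms(2) by simp
  have "f analytic_on {0}"
    using f by (rule has_fps_expansion_imp_analytic_0)
  then obtain e where "e > 0" and hol: "f holomorphic_on ball 0 e"
    by (auto simp: analytic_on_def)
  from \<open>f analytic_on {0}\<close> have "g analytic_on {0}"
    unfolding g_def using \<open>f 0 = 0\<close> by (auto intro!: analytic_intros)
  then show G: "g has_fps_expansion fps_expansion g 0"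
    by (rule analytic_at_imp_has_fps_expansion_0)
  show "fps_expansion g 0 $ 0 = 0"
    using has_fps_expansion_imp_0_eq_fps_nth_0[OF G] \<open>f 0 = 0\<close> by (simp add: g_def)
  have small: "eventually (\<lambda>z. norm (f z) < 1) (nhds 0)"
    using order_tendstoD(2)[OF tendsto_norm[OF has_fps_expansion_imp_tendsto_0[OF f]]] assms(2)
    by simp
  have "eventually (\<lambda>z. z \<in> ball 0 e) (nhds 0)"
    using \<open>e > 0\<close> by (intro eventually_nhds_in_open) auto
  with small have deriv_eq: "eventually (\<lambda>z. (1 - f z) * deriv g z = deriv f z) (nhds 0)"
  proof eventually_elim
    case (elim z)
    have "(f has_field_derivative deriv f z) (at z)"
      using hol elim(2) by (intro holomorphic_derivI) auto
    from has_field_derivative_Ln_inverse_one_minus[OF this elim(1)]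
    have "deriv g z = deriv f z / (1 - f z)"
      unfolding g_def by (rule DERIV_imp_deriv)
    moreover have "1 - f z \<noteq> 0"
      using elim(1) by auto
    ultimately show ?case by simp
  qed
  have "(\<lambda>z. (1 - f z) * deriv g z) has_fps_expansion (1 - F) * fps_deriv (fps_expansion g 0)"
    using f G by (intro fps_expansion_intros)
  then have "deriv f has_fps_expansion (1 - F) * fps_deriv (fps_expansion g 0)"
    using has_fps_expansion_cong[OF deriv_eq refl] by simp
  moreover have "deriv f has_fps_expansion fps_deriv F"
    using f by (rule has_fps_expansion_deriv)
  ultimately show "(1 - F) * fps_deriv (fps_expansion g 0) = fps_deriv F"
    by (rule fps_expansion_unique_complex)
qed

lemma has_fps_expansion_remainder_bound:
  fixes f :: "complex \<Rightarrow> complex" and F :: "complex fps"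
  assumes f: "f has_fps_expansion F" and low: "\<And>k. k \<le> n \<Longrightarrow> F $ k = 0"
    and bound: "norm (F $ Suc n) < B"
  shows "eventually (\<lambda>z. \<exists>h. norm h \<le> B \<and> f z = h * z ^ Suc n) (nhds 0)"
proof -
  define H where "H = fps_shift (Suc n) F"
  have F_eq: "F = H * fps_X ^ Suc n"
    by (rule fps_ext) (auto simp: H_def fps_X_power_mult_right_nth low simp del: power_Suc)
  have "fps_conv_radius H > 0"
    using f by (simp add: H_def has_fps_expansion_def)
  then have H: "eval_fps H has_fps_expansion H"
    by (rule eval_fps_has_fps_expansion)
  then have "(\<lambda>z. eval_fps H z * z ^ Suc n) has_fps_expansion F"
    unfolding F_eq by (intro fps_expansion_intros)
  with f have "eventually (\<lambda>z. f z = eval_fps H z * z ^ Suc n) (nhds 0)"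
    unfolding has_fps_expansion_def by (auto elim: eventually_elim2)
  moreover have "eventually (\<lambda>z. norm (eval_fps H z) < B) (nhds 0)"
    using order_tendstoD(2)[OF tendsto_norm[OF has_fps_expansion_imp_tendsto_0[OF H]]] bound
    by (simp add: H_def)
  ultimately show ?thesis
    by eventually_elim (auto intro: less_imp_le)
qed

definition fact_poly :: "nat \<Rightarrow> complex \<Rightarrow> complex" where
  "fact_poly N y = (\<Sum>n=1..N. fact n * y ^ n)"

definition log_taylor_poly :: "nat \<Rightarrow> complex \<Rightarrow> complex" where
  "log_taylor_poly N y = (\<Sum>n=1..N. of_int (seq_a n) / of_nat n * y ^ n)"

lemma Ln_inverse_one_minus_fact_poly_remainder:
  "eventually (\<lambda>y. \<exists>h. norm h \<le> of_int (seq_a (Suc N)) / of_nat (Suc N) \<and>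
      Ln (inverse (1 - fact_poly N y)) = log_taylor_poly N y + h * y ^ Suc N) (nhds 0)"
proof -
  have F: "fact_poly N has_fps_expansion fact_fps N"
    unfolding fact_poly_def fact_fps_def by (rule has_fps_expansion_monomial_sum) simp
  then obtain G where G: "(\<lambda>y. Ln (inverse (1 - fact_poly N y))) has_fps_expansion G"
    and G0: "G $ 0 = 0" and G_ode: "(1 - fact_fps N) * fps_deriv G = fps_deriv (fact_fps N)"
    by (rule Ln_inverse_one_minus_has_fps_expansion) (simp add: fact_fps_def)
  define Q :: "complex fps" where
    "Q = Abs_fps (\<lambda>n. if n \<in> {1..N} then of_int (seq_a n) / of_nat n else 0)"
  have "log_taylor_poly N has_fps_expansion Q"
    unfolding log_taylor_poly_def Q_def by (rule has_fps_expansion_monomial_sum) simp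
  with G have R: "(\<lambda>y. Ln (inverse (1 - fact_poly N y)) - log_taylor_poly N y) has_fps_expansion G - Q"
    by (intro fps_expansion_intros)
  have G_Suc: "G $ Suc j =
      (of_int (seq_a (Suc j)) - (if j = N then of_nat (Suc N) * fact (Suc N) else 0)) / of_nat (Suc j)"
    if "j \<le> N" for j
    using fps_deriv_nth_eq_seq_a[OF G_ode that] by (simp add: field_simps del: of_nat_Suc)
  have "(G - Q) $ k = 0" if "k \<le> N" for k
    using that G0 G_Suc[of "k - 1"] by (cases k) (auto simp: Q_def)
  moreover have "norm ((G - Q) $ Suc N) < of_int (seq_a (Suc N)) / of_nat (Suc N)"
  proof -
    define a where "a = real_of_int (seq_a (Suc N)) / of_nat (Suc N)"
    have "real (Suc N) * fact (Suc N) \<le> real_of_int (seq_a (Suc N))"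
      using seq_a_Suc_ge[of N, THEN of_int_le_iff[where 'a=real, THEN iffD2]] by (simp del: seq_a.simps)
    then have "fact (Suc N) \<le> a"
      unfolding a_def by (simp add: field_simps del: of_nat_Suc fact_Suc seq_a.simps)
    moreover have "(G - Q) $ Suc N = of_real (a - fact (Suc N))"
      using G_Suc[of N] by (simp add: a_def Q_def field_simps del: of_nat_Suc)
    ultimately have "norm ((G - Q) $ Suc N) = a - fact (Suc N)"
      by (metis abs_of_nonneg diff_ge_0_iff_ge norm_of_real)
    also have "\<dots> < a"
      by simp
    finally show ?thesis
      unfolding a_def .
  qed
  ultimately show ?thesis
    by (rule has_fps_expansion_remainder_bound[OF R, THEN eventually_mono]) (auto simp: algebra_simps)
qed

lemma eventually_nhds_0_imp_large_inverse:
  fixes P :: "'a::real_normed_div_algebra \<Rightarrow> bool"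
  assumes "eventually P (nhds 0)"
  obtains d where "d > 0" and "\<And>x. d \<le> norm x \<Longrightarrow> P (inverse x)"
proof -
  have "eventually (\<lambda>x. P (inverse x)) at_infinity"
    using assms tendsto_inverse_0 unfolding filterlim_iff by blast
  then obtain b where "\<And>x. b \<le> norm x \<Longrightarrow> P (inverse x)"
    unfolding eventually_at_infinity by blast
  then show ?thesis
    using that[of "max b 1"] by simp
qed

theorem proposition5p5:
  fixes N :: nat
  shows "\<exists>d>0. \<forall>x::complex. norm x \<ge> d \<longrightarrow>
           (\<exists>\<theta>::complex. norm \<theta> \<le> 1 \<and>
              Ln (inverse (1 - (\<Sum>n=1..N. of_nat (fact n) / x ^ n))) =
                (\<Sum>n=1..N. of_int (seq_a n) / of_nat n * (1 / x ^ n))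
                + \<theta> * (of_int (seq_a (N+1)) / of_nat (N+1)) * (1 / x ^ (N+1)))"
proof -
  define B where "B = real_of_int (seq_a (Suc N)) / of_nat (Suc N)"
  have "0 < B"
    using seq_a_Suc_pos[of N] by (simp add: B_def del: seq_a.simps)
  have B: "of_int (seq_a (N+1)) / of_nat (N+1) = complex_of_real B"
    by (simp add: B_def del: seq_a.simps)
  obtain d where "d > 0" and d: "\<And>x. d \<le> norm x \<Longrightarrow> \<exists>h. norm h \<le> B \<and>
      Ln (inverse (1 - fact_poly N (inverse x))) = log_taylor_poly N (inverse x) + h * inverse x ^ Suc N"
    using eventually_nhds_0_imp_large_inverse[OF Ln_inverse_one_minus_fact_poly_remainder[of N]]
    unfolding B_def by blast
  show ?thesis
  proof (intro exI[of _ d] conjI allI impI)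
    fix x :: complex
    assume "d \<le> norm x"
    then obtain h where "norm h \<le> B" and h: "Ln (inverse (1 - fact_poly N (inverse x))) =
        log_taylor_poly N (inverse x) + h * inverse x ^ Suc N"
      using d by blast
    with \<open>0 < B\<close> show "\<exists>\<theta>::complex. norm \<theta> \<le> 1 \<and>
        Ln (inverse (1 - (\<Sum>n=1..N. of_nat (fact n) / x ^ n))) =
          (\<Sum>n=1..N. of_int (seq_a n) / of_nat n * (1 / x ^ n))
          + \<theta> * (of_int (seq_a (N+1)) / of_nat (N+1)) * (1 / x ^ (N+1))"
      unfolding B by (intro exI[of _ "h / of_real B"] conjI)
        (simp add: norm_divide, simp add: fact_poly_def log_taylor_poly_def power_inverse
          divide_inverse del: seq_a.simps)
  qed (rule \<open>d > 0\<close>)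
qed

end
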